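(* Let $\mathcal X\subset\mathbb{R}$ be nonempty, compact and convex with $\mathcal X\subseteq[0,\infty)$, let $X^a,X^b\in\mathbb{R}^{3\times n}$, $t^a,t^b\in\mathbb{R}^3$, $\epsilon_r>0$, and define the cable-driven control term $b(\theta,u)=u\sqrt{\|(X^a\theta+t^a)-(X^b\theta+t^b)\|^2+\epsilon_r}$ for $\theta\in\mathbb{R}^n$, $u\in\mathcal X$. Then for every $u\in\mathcal X$, $b(\cdot,u)$ is twice differentiable with locally Lipschitz second derivatives and is $L$-curvature bounded for a constant $L$ independent of $u\in\mathcal X$, and $\|\partial^2b/\partial\theta\partial u\|$ is uniformly bounded over $\theta\in\mathbb{R}^n$, $u\in\mathcal X$.
   Context: A function $\phi$ is $L$-curvature bounded if $\phi(x)+\frac L2\|x\|^2$ is convex and $\nabla\phi$ is $L$-Lipschitz. *)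

theory Defs
  imports "HOL-Analysis.Analysis"
begin

definition cable_b ::
  "real^'n^3 \<Rightarrow> real^3 \<Rightarrow> real^'n^3 \<Rightarrow> real^3 \<Rightarrow> real \<Rightarrow> real^'n \<Rightarrow> real \<Rightarrow> real" where
  "cable_b Xa ta Xb tb er \<theta> u =
     u * sqrt ((norm ((Xa *v \<theta> + ta) - (Xb *v \<theta> + tb)))\<^sup>2 + er)"

definition twice_diff_loclip_hessian :: "('a::euclidean_space \<Rightarrow> real) \<Rightarrow> bool" where
  "twice_diff_loclip_hessian \<phi> \<longleftrightarrow>
     (\<exists>g H. (\<forall>x. (\<phi> has_derivative (\<lambda>h. g x \<bullet> h)) (at x)) \<and>
            (\<forall>x. (g has_derivative blinfun_apply (H x)) (at x)) \<and>
            (\<forall>x. \<exists>e>0. \<exists>K. lipschitz_on K (ball x e) H))"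

definition curvature_bounded :: "real \<Rightarrow> ('a::euclidean_space \<Rightarrow> real) \<Rightarrow> bool" where
  "curvature_bounded L \<phi> \<longleftrightarrow>
     convex_on UNIV (\<lambda>x. \<phi> x + L / 2 * (norm x)\<^sup>2) \<and>
     (\<exists>g. (\<forall>x. (\<phi> has_derivative (\<lambda>h. g x \<bullet> h)) (at x)) \<and> lipschitz_on L UNIV g)"

end

theory Submission
  imports Defs
begin

text \<open>Writing \<open>D = Xa - Xb\<close> and \<open>c = ta - tb\<close>, the control term is
  \<open>b(\<theta>, u) = u w(D \<theta> + c)\<close> with the smoothed norm \<open>w(z) = sqrt(|z|\<^sup>2 + \<epsilon>) = |(z, sqrt \<epsilon>)|\<close>.
  As the norm of an affine map, \<open>w\<close> is convex, so \<open>u w(D \<theta> + c)\<close> is convex for \<open>u \<ge> 0\<close>.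
  Its gradient \<open>v = z / w(z)\<close> has norm at most 1 and its Hessian is \<open>(I - v v\<^sup>T) / w\<close>;
  since \<open>w \<ge> sqrt \<epsilon>\<close>, both \<open>1 / w\<close> and \<open>v\<close> are bounded and globally Lipschitz, hence so are
  the gradient and the Hessian. Pulling back along \<open>\<theta> \<mapsto> D \<theta> + c\<close> and scaling by
  \<open>u \<le> max \<X>\<close> yields uniform constants, and the mixed derivative \<open>D\<^sup>T v\<close> is bounded by \<open>|D|\<close>.\<close>

lemma convex_on_norm_affine:
  assumes "linear f" "convex S"
  shows "convex_on S (\<lambda>x. norm (f x + c))"
proof (rule convex_onI)
  fix s :: real and x y assume s: "0 < s" "s < 1"
  have "f ((1 - s) *\<^sub>R x + s *\<^sub>R y) = (1 - s) *\<^sub>R f x + s *\<^sub>R f y"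
    using assms(1) by (simp add: linear_add linear_scale)
  then have "f ((1 - s) *\<^sub>R x + s *\<^sub>R y) + c = (1 - s) *\<^sub>R (f x + c) + s *\<^sub>R (f y + c)"
    by (simp add: algebra_simps)
  also have "norm \<dots> \<le> (1 - s) * norm (f x + c) + s * norm (f y + c)"
    using norm_triangle_ineq[of "(1 - s) *\<^sub>R (f x + c)" "s *\<^sub>R (f y + c)"] s by simp
  finally show "norm (f ((1 - s) *\<^sub>R x + s *\<^sub>R y) + c)
      \<le> (1 - s) * norm (f x + c) + s * norm (f y + c)" .
qed fact

lemma convex_on_norm_power2: "convex_on S (\<lambda>x::'a::real_inner. (norm x)\<^sup>2)" if "convex S"
proof (rule convex_onI)
  fix s :: real and x y :: 'a assume "0 < s" "s < 1"
  have "(1 - s) * (norm x)\<^sup>2 + s * (norm y)\<^sup>2 - (norm ((1 - s) *\<^sub>R x + s *\<^sub>R y))\<^sup>2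
      = s * (1 - s) * (norm (x - y))\<^sup>2"
    by (simp add: power2_norm_eq_inner inner_diff_left inner_diff_right inner_add_left
        inner_add_right inner_commute algebra_simps)
  moreover have "0 \<le> s * (1 - s) * (norm (x - y))\<^sup>2" using \<open>0 < s\<close> \<open>s < 1\<close> by simp
  ultimately show "(norm ((1 - s) *\<^sub>R x + s *\<^sub>R y))\<^sup>2 \<le> (1 - s) * (norm x)\<^sup>2 + s * (norm y)\<^sup>2"
    by linarith
qed fact

text \<open>\<open>h \<mapsto> a (h - (p \<bullet> h) p)\<close> is the shape of the Hessian of the smoothed norm, with
  \<open>a = 1 / w\<close> and \<open>p = z / w\<close>.\<close>

lemma norm_diff_deflation_le:
  fixes p q h :: "'a::real_inner"
  assumes p: "norm p \<le> 1" and q: "norm q \<le> 1"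
  shows "norm (a *\<^sub>R (h - (p \<bullet> h) *\<^sub>R p) - b *\<^sub>R (h - (q \<bullet> h) *\<^sub>R q))
    \<le> (2 * \<bar>a - b\<bar> + 2 * \<bar>b\<bar> * norm (p - q)) * norm h"
proof -
  have norm_diff4_le: "norm (w - x - y - z) \<le> norm w + norm x + norm y + norm z"
    for w x y z :: 'a
    by (smt (verit) norm_triangle_ineq4)
  have inner_le: "\<bar>z \<bullet> h\<bar> \<le> norm z * norm h" for z
    by (rule Cauchy_Schwarz_ineq2)
  have "a *\<^sub>R (h - (p \<bullet> h) *\<^sub>R p) - b *\<^sub>R (h - (q \<bullet> h) *\<^sub>R q)
      = (a - b) *\<^sub>R h - ((a - b) * (p \<bullet> h)) *\<^sub>R p - (b * ((p - q) \<bullet> h)) *\<^sub>R p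
        - (b * (q \<bullet> h)) *\<^sub>R (p - q)"
    by (simp add: algebra_simps inner_diff_left)
  also have "norm \<dots> \<le> \<bar>a - b\<bar> * norm h + \<bar>a - b\<bar> * (\<bar>p \<bullet> h\<bar> * norm p)
      + \<bar>b\<bar> * (\<bar>(p - q) \<bullet> h\<bar> * norm p) + \<bar>b\<bar> * (\<bar>q \<bullet> h\<bar> * norm (p - q))"
    by (rule order_trans[OF norm_diff4_le]) (simp add: abs_mult ac_simps)
  also have "\<dots> \<le> \<bar>a - b\<bar> * norm h + \<bar>a - b\<bar> * norm h
      + \<bar>b\<bar> * (norm (p - q) * norm h) + \<bar>b\<bar> * (norm (p - q) * norm h)"
  proof -
    have unit_inner_le: "\<bar>z \<bullet> h\<bar> \<le> norm h" if "norm z \<le> 1" for z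
      using inner_le[of z] mult_right_mono[OF that norm_ge_zero[of h]] by simp
    have "\<bar>p \<bullet> h\<bar> * norm p \<le> norm h"
      using unit_inner_le[OF p] p by (metis abs_ge_zero mult_left_le order_trans)
    moreover have "\<bar>q \<bullet> h\<bar> * norm (p - q) \<le> norm h * norm (p - q)"
      using unit_inner_le[OF q] by (rule mult_right_mono) simp
    moreover have "\<bar>(p - q) \<bullet> h\<bar> * norm p \<le> norm (p - q) * norm h"
      using inner_le[of "p - q"] p by (metis abs_ge_zero mult_left_le order_trans)
    ultimately show ?thesis by (intro add_mono mult_left_mono) (auto simp: mult.commute)
  qed
  finally show ?thesis by (simp add: algebra_simps)
qed

definition blinfun_adjoint :: "('a::euclidean_space \<Rightarrow>\<^sub>L 'b::euclidean_space) \<Rightarrow> 'b \<Rightarrow>\<^sub>L 'a" where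
  "blinfun_adjoint A = Blinfun (adjoint (blinfun_apply A))"

lemma blinfun_apply_blinfun_adjoint: "blinfun_apply (blinfun_adjoint A) = adjoint (blinfun_apply A)"
  unfolding blinfun_adjoint_def
proof (rule bounded_linear_Blinfun_apply)
  show "bounded_linear (adjoint (blinfun_apply A))"
    using adjoint_linear[OF bounded_linear.linear[OF blinfun.bounded_linear_right]]
    by (simp add: linear_conv_bounded_linear)
qed

lemma inner_blinfun_adjoint: "x \<bullet> blinfun_adjoint A y = A x \<bullet> y"
  by (simp add: blinfun_apply_blinfun_adjoint adjoint_works
      bounded_linear.linear[OF blinfun.bounded_linear_right])

lemma norm_blinfun_adjoint_le: "norm (blinfun_adjoint A) \<le> norm A"
proof (rule norm_blinfun_bound)
  fix y
  let ?z = "blinfun_adjoint A y"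
  have "norm ?z * norm ?z = A ?z \<bullet> y"
    by (simp flip: inner_blinfun_adjoint power2_norm_eq_inner add: power2_eq_square)
  also have "\<dots> \<le> norm A * norm ?z * norm y"
    by (rule order_trans[OF norm_cauchy_schwarz mult_right_mono[OF norm_blinfun]]) simp
  finally show "norm ?z \<le> norm A * norm y"
    by (cases "norm ?z = 0") (auto simp: mult.commute mult.left_commute)
qed simp

lemma lipschitz_on_blinfun_affine:
  fixes A :: "'a::real_normed_vector \<Rightarrow>\<^sub>L 'b::real_normed_vector"
  shows "(norm A)-lipschitz_on U (\<lambda>x. A x + c)"
  by (rule lipschitz_onI) (auto simp: dist_norm norm_blinfun simp flip: blinfun.diff_right)

lemma lipschitz_on_blinfun_compose_both:
  fixes A :: "'a::real_normed_vector \<Rightarrow>\<^sub>L 'b::real_normed_vector"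
    and B :: "'c::real_normed_vector \<Rightarrow>\<^sub>L 'd::real_normed_vector"
  shows "(norm B * norm A)-lipschitz_on U (\<lambda>K. B o\<^sub>L K o\<^sub>L A)"
proof (rule lipschitz_onI)
  fix K K' :: "'b \<Rightarrow>\<^sub>L 'c"
  have "(B o\<^sub>L K o\<^sub>L A) - (B o\<^sub>L K' o\<^sub>L A) = B o\<^sub>L (K - K') o\<^sub>L A"
    by (rule blinfun_eqI) (simp add: blinfun.diff_left blinfun.diff_right)
  then show "dist (B o\<^sub>L K o\<^sub>L A) (B o\<^sub>L K' o\<^sub>L A) \<le> norm B * norm A * dist K K'"
    using norm_blinfun_compose[of "B o\<^sub>L (K - K')" A] norm_blinfun_compose[of B "K - K'"]
    by (simp add: dist_norm) (smt (verit) mult.commute mult_right_mono norm_ge_zero mult.assoc)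
qed simp

definition smooth_norm :: "real \<Rightarrow> 'a::real_inner \<Rightarrow> real" where
  "smooth_norm e x = sqrt ((norm x)\<^sup>2 + e)"

definition smooth_norm_grad :: "real \<Rightarrow> 'a::real_inner \<Rightarrow> 'a" where
  "smooth_norm_grad e x = x /\<^sub>R smooth_norm e x"

definition smooth_norm_hess :: "real \<Rightarrow> 'a::real_inner \<Rightarrow> 'a \<Rightarrow>\<^sub>L 'a" where
  "smooth_norm_hess e x = Blinfun (\<lambda>h. inverse (smooth_norm e x) *\<^sub>R
     (h - (smooth_norm_grad e x \<bullet> h) *\<^sub>R smooth_norm_grad e x))"

lemma smooth_norm_hess_apply:
  "smooth_norm_hess e x h
     = inverse (smooth_norm e x) *\<^sub>R (h - (smooth_norm_grad e x \<bullet> h) *\<^sub>R smooth_norm_grad e x)"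
proof -
  have "bounded_linear (\<lambda>h. inverse (smooth_norm e x) *\<^sub>R
      (h - (smooth_norm_grad e x \<bullet> h) *\<^sub>R smooth_norm_grad e x))"
    by (intro bounded_linear_intros)
  then show ?thesis
    unfolding smooth_norm_hess_def by (simp only: bounded_linear_Blinfun_apply)
qed

lemma sqrt_le_smooth_norm: "sqrt e \<le> smooth_norm e x"
  by (simp add: smooth_norm_def)

context
  fixes e :: real
  assumes e_pos: "0 < e"
begin

lemma smooth_norm_eq_norm_Pair: "smooth_norm e x = norm (x, sqrt e)"
  using e_pos by (simp add: smooth_norm_def norm_Pair)

lemma smooth_norm_pos: "0 < smooth_norm e x"
  using e_pos by (simp add: smooth_norm_def add_nonneg_pos)

lemma norm_le_smooth_norm: "norm x \<le> smooth_norm e x"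
  using e_pos by (simp add: smooth_norm_def real_le_rsqrt)

lemma abs_smooth_norm_diff_le: "\<bar>smooth_norm e x - smooth_norm e y\<bar> \<le> norm (x - y)"
  using norm_triangle_ineq3[of "(x, sqrt e)" "(y, sqrt e)"]
  by (simp add: smooth_norm_eq_norm_Pair)

lemma abs_inverse_smooth_norm_diff_le:
  "\<bar>inverse (smooth_norm e x) - inverse (smooth_norm e y)\<bar> \<le> norm (x - y) / e"
proof -
  have "e = sqrt e * sqrt e" using e_pos by simp
  also have "\<dots> \<le> smooth_norm e x * smooth_norm e y"
    using sqrt_le_smooth_norm smooth_norm_pos e_pos by (intro mult_mono) (auto intro: less_imp_le)
  finally have e_le: "e \<le> smooth_norm e x * smooth_norm e y" .
  have "\<bar>inverse (smooth_norm e x) - inverse (smooth_norm e y)\<bar>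
      = \<bar>smooth_norm e x - smooth_norm e y\<bar> / (smooth_norm e x * smooth_norm e y)"
    using smooth_norm_pos[of x] smooth_norm_pos[of y]
    by (simp add: field_simps abs_minus_commute)
  also have "\<dots> \<le> norm (x - y) / e"
    using abs_smooth_norm_diff_le[of x y] e_le e_pos by (intro frac_le) auto
  finally show ?thesis .
qed

lemma norm_smooth_norm_grad_le: "norm (smooth_norm_grad e x) \<le> 1"
  using norm_le_smooth_norm[of x] smooth_norm_pos[of x]
  by (simp add: smooth_norm_grad_def field_simps)

lemma lipschitz_smooth_norm_grad: "(2 / sqrt e)-lipschitz_on UNIV (smooth_norm_grad e)"
proof (rule lipschitz_onI)
  fix x y :: 'a
  let ?w = "smooth_norm e"
  have "(inverse (?w x) - inverse (?w y)) *\<^sub>R y = ((?w y - ?w x) / ?w x) *\<^sub>R smooth_norm_grad e y"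
    unfolding smooth_norm_grad_def scaleR_scaleR
    using smooth_norm_pos[of x] smooth_norm_pos[of y]
    by (intro arg_cong[where f = "\<lambda>t. t *\<^sub>R y"]) (simp add: field_simps)
  then have "smooth_norm_grad e x - smooth_norm_grad e y
      = inverse (?w x) *\<^sub>R (x - y) + ((?w y - ?w x) / ?w x) *\<^sub>R smooth_norm_grad e y"
    by (simp add: smooth_norm_grad_def algebra_simps)
  also have "norm \<dots> \<le> norm (x - y) / ?w x + norm (x - y) / ?w x"
  proof -
    have "\<bar>?w y - ?w x\<bar> * norm (smooth_norm_grad e y) \<le> norm (x - y)"
      using abs_smooth_norm_diff_le[of y x] norm_smooth_norm_grad_le[of y]
      by (metis abs_ge_zero mult_left_le norm_minus_commute order_trans)
    then show ?thesis
      using smooth_norm_pos[of x]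
      by (intro order_trans[OF norm_triangle_ineq] add_mono)
         (auto simp: divide_inverse abs_mult mult.commute mult.left_commute intro: mult_left_mono)
  qed
  also have "\<dots> \<le> 2 / sqrt e * norm (x - y)"
  proof -
    have "norm (x - y) / ?w x \<le> norm (x - y) / sqrt e"
      using sqrt_le_smooth_norm[of e x] smooth_norm_pos[of x] e_pos by (intro divide_left_mono) auto
    then show ?thesis by simp
  qed
  finally show "dist (smooth_norm_grad e x) (smooth_norm_grad e y) \<le> 2 / sqrt e * dist x y"
    by (simp add: dist_norm)
qed (use e_pos in simp)

lemma has_derivative_smooth_norm:
  "(smooth_norm e has_derivative (\<lambda>h. smooth_norm_grad e x \<bullet> h)) (at x)"
proof -
  have eq: "smooth_norm e = (\<lambda>x. sqrt (x \<bullet> x + e))"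
    by (auto simp: smooth_norm_def power2_norm_eq_inner)
  have pos: "0 < x \<bullet> x + e"
    using e_pos by (simp add: add_nonneg_pos)
  show ?thesis
    unfolding eq
    using pos
    by (auto intro!: derivative_eq_intros simp: smooth_norm_grad_def smooth_norm_def
        power2_norm_eq_inner inner_commute field_simps)
qed

lemma has_derivative_smooth_norm_grad:
  "(smooth_norm_grad e has_derivative smooth_norm_hess e x) (at x)"
proof -
  have eq: "smooth_norm_grad e = (\<lambda>x. inverse (smooth_norm e x) *\<^sub>R x)"
    by (auto simp: smooth_norm_grad_def)
  have nz: "smooth_norm e x \<noteq> 0"
    using smooth_norm_pos[of x] by simp
  show ?thesis
    unfolding eq using nz
    by (auto intro!: derivative_eq_intros has_derivative_smooth_norm
        simp: smooth_norm_hess_apply smooth_norm_grad_def field_simps power2_eq_square)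
qed

lemma lipschitz_smooth_norm_hess:
  "(6 / e)-lipschitz_on UNIV (smooth_norm_hess e)"
proof (rule lipschitz_onI)
  fix x y :: 'a
  let ?a = "inverse (smooth_norm e x)" and ?b = "inverse (smooth_norm e y)"
  have "norm (smooth_norm_hess e x - smooth_norm_hess e y) \<le> 6 / e * norm (x - y)"
  proof (rule norm_blinfun_bound)
    fix h
    have b_le: "\<bar>?b\<bar> \<le> 1 / sqrt e"
      using sqrt_le_smooth_norm[of e y] smooth_norm_pos[of y] e_pos
      by (simp add: divide_inverse le_imp_inverse_le)
    have "norm ((smooth_norm_hess e x - smooth_norm_hess e y) h)
        \<le> (2 * \<bar>?a - ?b\<bar> + 2 * \<bar>?b\<bar> * norm (smooth_norm_grad e x - smooth_norm_grad e y)) * norm h"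
      unfolding blinfun.diff_left smooth_norm_hess_apply
      by (intro norm_diff_deflation_le norm_smooth_norm_grad_le e_pos)
    also have "\<dots> \<le> (2 * (norm (x - y) / e) + 2 * (1 / sqrt e) * (2 / sqrt e * norm (x - y))) * norm h"
      using abs_inverse_smooth_norm_diff_le[of x y] b_le
        lipschitz_on_normD[OF lipschitz_smooth_norm_grad, of x y] e_pos
      by (intro mult_right_mono add_mono mult_left_mono mult_mono) auto
    also have "\<dots> = 6 / e * norm (x - y) * norm h"
      using e_pos by (simp add: field_simps)
    finally show "norm ((smooth_norm_hess e x - smooth_norm_hess e y) h) \<le> 6 / e * norm (x - y) * norm h" .
  qed (use e_pos in simp)
  then show "dist (smooth_norm_hess e x) (smooth_norm_hess e y) \<le> 6 / e * dist x y"
    by (simp add: dist_norm)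
qed (use e_pos in simp)

context
  fixes A :: "'a::euclidean_space \<Rightarrow>\<^sub>L 'b::euclidean_space" and c :: 'b
begin

lemma convex_on_smooth_norm_affine: "convex_on UNIV (\<lambda>x. smooth_norm e (A x + c))"
proof -
  have "linear (\<lambda>x. (A x, 0::real))"
    by (simp add: linear_conv_bounded_linear bounded_linear_intros)
  then have "convex_on UNIV (\<lambda>x. norm ((A x, 0) + (c, sqrt e)))"
    by (rule convex_on_norm_affine) simp
  then show ?thesis
    by (simp add: smooth_norm_eq_norm_Pair)
qed

lemma has_derivative_smooth_norm_affine:
  "((\<lambda>x. smooth_norm e (A x + c)) has_derivative
     (\<lambda>h. blinfun_adjoint A (smooth_norm_grad e (A x + c)) \<bullet> h)) (at x)"
proof -
  have "((\<lambda>x. smooth_norm e (A x + c)) has_derivative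
      (\<lambda>h. smooth_norm_grad e (A x + c) \<bullet> A h)) (at x)"
    by (rule has_derivative_compose[OF _ has_derivative_smooth_norm])
       (auto intro!: derivative_eq_intros)
  then show ?thesis
    by (simp add: inner_blinfun_adjoint inner_commute)
qed

lemma has_derivative_smooth_norm_affine_grad:
  "((\<lambda>x. blinfun_adjoint A (smooth_norm_grad e (A x + c))) has_derivative
     (blinfun_adjoint A o\<^sub>L smooth_norm_hess e (A x + c) o\<^sub>L A)) (at x)"
proof -
  have "((\<lambda>x. smooth_norm_grad e (A x + c)) has_derivative
      (\<lambda>h. smooth_norm_hess e (A x + c) (A h))) (at x)"
    by (rule has_derivative_compose[OF _ has_derivative_smooth_norm_grad])
       (auto intro!: derivative_eq_intros)
  then have "((\<lambda>x. blinfun_adjoint A (smooth_norm_grad e (A x + c))) has_derivative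
      (\<lambda>h. blinfun_adjoint A (smooth_norm_hess e (A x + c) (A h)))) (at x)"
    by (rule bounded_linear.has_derivative[OF blinfun.bounded_linear_right])
  moreover have "(\<lambda>h. blinfun_adjoint A (smooth_norm_hess e (A x + c) (A h)))
      = blinfun_adjoint A o\<^sub>L smooth_norm_hess e (A x + c) o\<^sub>L A"
    by (rule ext) simp
  ultimately show ?thesis
    by simp
qed

lemma norm_grad_smooth_norm_affine_le:
  "norm (blinfun_adjoint A (smooth_norm_grad e (A x + c))) \<le> norm A"
  using norm_blinfun[of "blinfun_adjoint A" "smooth_norm_grad e (A x + c)"]
    norm_blinfun_adjoint_le[of A] norm_smooth_norm_grad_le[of "A x + c"]
  by (smt (verit) mult_mono norm_ge_zero mult_cancel_left1)

lemma twice_diff_loclip_hessian_smooth_norm_affine: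
  "twice_diff_loclip_hessian (\<lambda>x. u * smooth_norm e (A x + c))"
proof -
  let ?g = "\<lambda>x. u *\<^sub>R blinfun_adjoint A (smooth_norm_grad e (A x + c))"
  let ?H = "\<lambda>x. u *\<^sub>R (blinfun_adjoint A o\<^sub>L smooth_norm_hess e (A x + c) o\<^sub>L A)"
  have "((\<lambda>x. u * smooth_norm e (A x + c)) has_derivative (\<lambda>h. ?g x \<bullet> h)) (at x)" for x
    using has_derivative_mult_right[OF has_derivative_smooth_norm_affine, of u] by simp
  moreover have "(?g has_derivative ?H x) (at x)" for x
  proof -
    have "blinfun_apply (?H x)
        = (\<lambda>h. u *\<^sub>R (blinfun_adjoint A o\<^sub>L smooth_norm_hess e (A x + c) o\<^sub>L A) h)"
      by (rule ext) (simp add: blinfun.scaleR_left)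
    then show ?thesis
      using has_derivative_scaleR_right[OF has_derivative_smooth_norm_affine_grad, of u]
      by simp
  qed
  moreover have "lipschitz_on (\<bar>u\<bar> * (norm (blinfun_adjoint A) * norm A * (6 / e * norm A))) UNIV ?H"
    by (intro lipschitz_on_cmult lipschitz_on_compose2[OF lipschitz_on_blinfun_affine]
        lipschitz_on_compose2[OF _ lipschitz_on_blinfun_compose_both]
        lipschitz_on_subset[OF lipschitz_smooth_norm_hess]) auto
  then have "\<exists>r>0. \<exists>K. lipschitz_on K (ball x r) ?H" for x
    by (meson lipschitz_on_subset subset_UNIV zero_less_one)
  ultimately show ?thesis
    unfolding twice_diff_loclip_hessian_def by (intro exI[of _ ?g] exI[of _ ?H]) blast
qed

lemma curvature_bounded_smooth_norm_affine:
  assumes "0 \<le> u" "u \<le> U"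
  shows "curvature_bounded (2 * U * (norm A)\<^sup>2 / sqrt e) (\<lambda>x. u * smooth_norm e (A x + c))"
  unfolding curvature_bounded_def
proof (intro conjI exI allI)
  let ?L = "2 * U * (norm A)\<^sup>2 / sqrt e"
  have "0 \<le> ?L" using assms e_pos by simp
  then show "convex_on UNIV (\<lambda>x. u * smooth_norm e (A x + c) + ?L / 2 * (norm x)\<^sup>2)"
    using assms(1)
    by (intro convex_on_add convex_on_cmul convex_on_smooth_norm_affine
        convex_on_norm_power2) auto
  fix x
  show "((\<lambda>x. u * smooth_norm e (A x + c)) has_derivative
      (\<lambda>h. (u *\<^sub>R blinfun_adjoint A (smooth_norm_grad e (A x + c))) \<bullet> h)) (at x)"
    using has_derivative_mult_right[OF has_derivative_smooth_norm_affine, of u] by simp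
next
  have "lipschitz_on (U * (norm (blinfun_adjoint A) * (2 / sqrt e * norm A))) UNIV
      (\<lambda>x. u *\<^sub>R blinfun_adjoint A (smooth_norm_grad e (A x + c)))"
    using assms
    by (intro lipschitz_on_cmult_upper lipschitz_on_compose2[OF lipschitz_on_blinfun_affine]
        lipschitz_on_compose2[OF _ lipschitz_on_blinfun_affine[where c = 0, simplified]]
        lipschitz_on_subset[OF lipschitz_smooth_norm_grad]) auto
  moreover have "U * (norm (blinfun_adjoint A) * (2 / sqrt e * norm A)) \<le> 2 * U * (norm A)\<^sup>2 / sqrt e"
  proof -
    have "norm (blinfun_adjoint A) * norm A \<le> norm A * norm A"
      using norm_blinfun_adjoint_le by (rule mult_right_mono) simp
    moreover have "0 \<le> 2 * U / sqrt e" using assms e_pos by simp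
    ultimately have "2 * U / sqrt e * (norm (blinfun_adjoint A) * norm A)
        \<le> 2 * U / sqrt e * (norm A * norm A)"
      by (rule mult_left_mono)
    then show ?thesis
      by (simp add: power2_eq_square mult_ac)
  qed
  ultimately show "lipschitz_on (2 * U * (norm A)\<^sup>2 / sqrt e) UNIV
      (\<lambda>x. u *\<^sub>R blinfun_adjoint A (smooth_norm_grad e (A x + c)))"
    by (rule lipschitz_on_le)
qed

end

end

lemma cable_b_eq_smooth_norm_affine:
  "cable_b Xa ta Xb tb er \<theta> u = u * smooth_norm er (Blinfun ((*v) (Xa - Xb)) \<theta> + (ta - tb))"
  by (simp add: cable_b_def smooth_norm_def bounded_linear_Blinfun_apply
      matrix_vector_mult_diff_rdistrib algebra_simps)

theorem corollary9:
  fixes \<X> :: "real set" and Xa Xb :: "real^'n^3" and ta tb :: "real^3" and er :: real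
  assumes "\<X> \<noteq> {}" and "compact \<X>" and "convex \<X>" and "\<X> \<subseteq> {0..}"
    and "er > 0"
  shows "(\<forall>u\<in>\<X>. twice_diff_loclip_hessian (\<lambda>\<theta>. cable_b Xa ta Xb tb er \<theta> u))
     \<and> (\<exists>L. \<forall>u\<in>\<X>. curvature_bounded L (\<lambda>\<theta>. cable_b Xa ta Xb tb er \<theta> u))
     \<and> (\<exists>C. \<forall>\<theta>. \<forall>u\<in>\<X>. \<exists>du :: real^'n \<Rightarrow> real. \<exists>gm :: real^'n.
          (\<forall>\<theta>'. ((\<lambda>v. cable_b Xa ta Xb tb er \<theta>' v) has_real_derivative du \<theta>') (at u)) \<and>
          (du has_derivative (\<lambda>h. gm \<bullet> h)) (at \<theta>) \<and> norm gm \<le> C)"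
proof -
  let ?A = "Blinfun ((*v) (Xa - Xb))" and ?c = "ta - tb"
  let ?w = "\<lambda>\<theta>. smooth_norm er (?A \<theta> + ?c)"
  have b_eq: "(\<lambda>\<theta>. cable_b Xa ta Xb tb er \<theta> u) = (\<lambda>\<theta>. u * ?w \<theta>)" for u
    by (simp add: cable_b_eq_smooth_norm_affine)
  obtain U where U: "\<forall>u\<in>\<X>. u \<le> U"
    using compact_imp_bounded[OF \<open>compact \<X>\<close>] unfolding bounded_iff real_norm_def by (meson abs_le_D1)
  have "\<forall>u\<in>\<X>. twice_diff_loclip_hessian (\<lambda>\<theta>. cable_b Xa ta Xb tb er \<theta> u)"
    unfolding b_eq using twice_diff_loclip_hessian_smooth_norm_affine[OF \<open>er > 0\<close>] by blast
  moreover have "\<forall>u\<in>\<X>. curvature_bounded (2 * U * (norm ?A)\<^sup>2 / sqrt er)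
      (\<lambda>\<theta>. cable_b Xa ta Xb tb er \<theta> u)"
    unfolding b_eq using U \<open>\<X> \<subseteq> {0..}\<close> \<open>er > 0\<close>
    by (auto intro!: curvature_bounded_smooth_norm_affine)
  moreover have "\<exists>du gm. (\<forall>\<theta>'. ((\<lambda>v. cable_b Xa ta Xb tb er \<theta>' v) has_real_derivative du \<theta>') (at u))
      \<and> (du has_derivative (\<lambda>h. gm \<bullet> h)) (at \<theta>) \<and> norm gm \<le> norm ?A" for \<theta> u
  proof (intro exI conjI allI)
    show "((\<lambda>v. cable_b Xa ta Xb tb er \<theta>' v) has_real_derivative ?w \<theta>') (at u)" for \<theta>'
      unfolding cable_b_eq_smooth_norm_affine by (auto intro!: derivative_eq_intros)
    show "(?w has_derivative (\<lambda>h. blinfun_adjoint ?A (smooth_norm_grad er (?A \<theta> + ?c)) \<bullet> h)) (at \<theta>)"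
      by (rule has_derivative_smooth_norm_affine[OF \<open>er > 0\<close>])
    show "norm (blinfun_adjoint ?A (smooth_norm_grad er (?A \<theta> + ?c))) \<le> norm ?A"
      by (rule norm_grad_smooth_norm_affine_le[OF \<open>er > 0\<close>])
  qed
  ultimately show ?thesis
    by blast
qed

end
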